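(* Let $A$ be a finite-dimensional evolution algebra over a field $\mathbb{K}$ with natural basis $B$. \begin{enumerate} \item[(i)] If $I$ is an ideal of $A$ with $I=\mathbb{K}u$ and $|\mathrm{supp}_B(u)|>1$, then $A/I$ is not simple. \item[(ii)] If $A=A_1\otimes A_2$ where $A_1,A_2$ are evolution $\mathbb{K}$-algebras with $\dim A_1>1$ and $\dim A_2>1$ (so $A$ is tensorially decomposable), and $0\neq I$ is an ideal of $A$ with $I=\mathbb{K}u$, then $A/I$ is not simple. \end{enumerate}
   Context: An evolution algebra over $\mathbb{K}$ is a $\mathbb{K}$-algebra with a basis $B=\{e_1,\dots,e_n\}$ (natural basis) such that $e_ie_j=0$ for $i\neq j$. For $u=\sum_i\alpha_ie_i\in A$, $\mathrm{supp}_B(u)=\{i:\alpha_i\neq0\}$. The tensor product $A_1\otimes A_2$ of evolution algebras with natural bases $\{a_i\}$, $\{b_p\}$ is the evolution algebra with natural basis $\{a_i\otimes b_p\}$ and product $(a\otimes b)(a'\otimes b')=aa'\otimes bb'$. A $\mathbb{K}$-algebra is simple if its square is nonzero and its only ideals are $0$ and itself. *)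

theory Defs
  imports Main
begin

definition alg_ideal ::
  "'a set \<Rightarrow> ('a \<Rightarrow> 'a \<Rightarrow> 'a) \<Rightarrow> ('k \<Rightarrow> 'a \<Rightarrow> 'a) \<Rightarrow> ('a \<Rightarrow> 'a \<Rightarrow> 'a) \<Rightarrow> 'a \<Rightarrow> 'a set \<Rightarrow> bool"
  where "alg_ideal S add sm mul z I \<longleftrightarrow>
     I \<subseteq> S \<and> z \<in> I \<and> (\<forall>x\<in>I. \<forall>y\<in>I. add x y \<in> I) \<and> (\<forall>a. \<forall>x\<in>I. sm a x \<in> I) \<and>
     (\<forall>x\<in>I. \<forall>a\<in>S. mul a x \<in> I \<and> mul x a \<in> I)"

definition alg_simple ::
  "'a set \<Rightarrow> ('a \<Rightarrow> 'a \<Rightarrow> 'a) \<Rightarrow> ('k \<Rightarrow> 'a \<Rightarrow> 'a) \<Rightarrow> ('a \<Rightarrow> 'a \<Rightarrow> 'a) \<Rightarrow> 'a \<Rightarrow> bool"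
  where "alg_simple S add sm mul z \<longleftrightarrow>
     (\<exists>x\<in>S. \<exists>y\<in>S. mul x y \<noteq> z) \<and>
     (\<forall>J. alg_ideal S add sm mul z J \<longrightarrow> J = {z} \<or> J = S)"

definition coset :: "('a \<Rightarrow> 'a \<Rightarrow> 'a) \<Rightarrow> 'a \<Rightarrow> 'a set \<Rightarrow> 'a set"
  where "coset add x I = (\<lambda>y. add x y) ` I"

definition quot_carrier :: "'a set \<Rightarrow> ('a \<Rightarrow> 'a \<Rightarrow> 'a) \<Rightarrow> 'a set \<Rightarrow> 'a set set"
  where "quot_carrier S add I = (\<lambda>x. coset add x I) ` S"

definition quot_add :: "('a \<Rightarrow> 'a \<Rightarrow> 'a) \<Rightarrow> 'a set \<Rightarrow> 'a set \<Rightarrow> 'a set \<Rightarrow> 'a set"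
  where "quot_add add I X Y = coset add (add (SOME x. x \<in> X) (SOME y. y \<in> Y)) I"

definition quot_smult :: "('a \<Rightarrow> 'a \<Rightarrow> 'a) \<Rightarrow> ('k \<Rightarrow> 'a \<Rightarrow> 'a) \<Rightarrow> 'a set \<Rightarrow> 'k \<Rightarrow> 'a set \<Rightarrow> 'a set"
  where "quot_smult add sm I a X = coset add (sm a (SOME x. x \<in> X)) I"

definition quot_mul :: "('a \<Rightarrow> 'a \<Rightarrow> 'a) \<Rightarrow> ('a \<Rightarrow> 'a \<Rightarrow> 'a) \<Rightarrow> 'a set \<Rightarrow> 'a set \<Rightarrow> 'a set \<Rightarrow> 'a set"
  where "quot_mul add mul I X Y = coset add (mul (SOME x. x \<in> X) (SOME y. y \<in> Y)) I"

text \<open>The quotient S/I is simple (its zero is the coset I itself).\<close>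
definition quot_simple ::
  "'a set \<Rightarrow> ('a \<Rightarrow> 'a \<Rightarrow> 'a) \<Rightarrow> ('k \<Rightarrow> 'a \<Rightarrow> 'a) \<Rightarrow> ('a \<Rightarrow> 'a \<Rightarrow> 'a) \<Rightarrow> 'a set \<Rightarrow> bool"
  where "quot_simple S add sm mul I \<longleftrightarrow>
     alg_simple (quot_carrier S add I) (quot_add add I) (quot_smult add sm I) (quot_mul add mul I) I"

text \<open>An evolution algebra with finite natural basis {e_i | i \<in> N}, written in coordinates
  w.r.t. that basis: elements are functions 'i \<Rightarrow> 'k vanishing outside N, and
  e_i e_i = \<Sum>_{j\<in>N} c i j e_j, e_i e_j = 0 for i \<noteq> j.\<close>

definition evo_carrier :: "'i set \<Rightarrow> ('i \<Rightarrow> 'k::field) set"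
  where "evo_carrier N = {x. \<forall>i. i \<notin> N \<longrightarrow> x i = 0}"

definition evo_add :: "('i \<Rightarrow> 'k::field) \<Rightarrow> ('i \<Rightarrow> 'k) \<Rightarrow> ('i \<Rightarrow> 'k)"
  where "evo_add x y = (\<lambda>i. x i + y i)"

definition evo_smult :: "'k::field \<Rightarrow> ('i \<Rightarrow> 'k) \<Rightarrow> ('i \<Rightarrow> 'k)"
  where "evo_smult a x = (\<lambda>i. a * x i)"

definition evo_zero :: "'i \<Rightarrow> 'k::field"
  where "evo_zero = (\<lambda>i. 0)"

definition evo_mult :: "'i set \<Rightarrow> ('i \<Rightarrow> 'i \<Rightarrow> 'k::field) \<Rightarrow> ('i \<Rightarrow> 'k) \<Rightarrow> ('i \<Rightarrow> 'k) \<Rightarrow> ('i \<Rightarrow> 'k)"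
  where "evo_mult N c x y = (\<lambda>k. if k \<in> N then (\<Sum>i\<in>N. x i * y i * c i k) else 0)"

definition evo_ideal :: "'i set \<Rightarrow> ('i \<Rightarrow> 'i \<Rightarrow> 'k::field) \<Rightarrow> ('i \<Rightarrow> 'k) set \<Rightarrow> bool"
  where "evo_ideal N c I = alg_ideal (evo_carrier N) evo_add (evo_smult :: 'k \<Rightarrow> _) (evo_mult N c) evo_zero I"

definition evo_quot_simple :: "'i set \<Rightarrow> ('i \<Rightarrow> 'i \<Rightarrow> 'k::field) \<Rightarrow> ('i \<Rightarrow> 'k) set \<Rightarrow> bool"
  where "evo_quot_simple N c I = quot_simple (evo_carrier N) evo_add (evo_smult :: 'k \<Rightarrow> _) (evo_mult N c) I"

definition evo_supp :: "'i set \<Rightarrow> ('i \<Rightarrow> 'k::field) \<Rightarrow> 'i set"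
  where "evo_supp N u = {i \<in> N. u i \<noteq> 0}"

definition span1 :: "('i \<Rightarrow> 'k::field) \<Rightarrow> ('i \<Rightarrow> 'k) set"
  where "span1 u = range (\<lambda>a. evo_smult a u)"

text \<open>Tensor product: natural basis a_i \<otimes> b_p indexed by N1 \<times> N2, with
  (a_i \<otimes> b_p)^2 = a_i^2 \<otimes> b_p^2 = \<Sum> c1 i j * c2 p q (a_j \<otimes> b_q).\<close>
definition tensor_const :: "('i \<Rightarrow> 'i \<Rightarrow> 'k::field) \<Rightarrow> ('j \<Rightarrow> 'j \<Rightarrow> 'k) \<Rightarrow> ('i \<times> 'j) \<Rightarrow> ('i \<times> 'j) \<Rightarrow> 'k"
  where "tensor_const c1 c2 = (\<lambda>(i, p) (j, q). c1 i j * c2 p q)"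

end

theory Submission
  imports Defs
begin

(*
  In both parts A/Ku is shown to be non-simple either because A^2 is contained in Ku, so that
  the quotient has zero square, or by an ideal W with Ku < W < A, whose image is a proper
  nonzero ideal of A/Ku. In (i) W = {x. xA <= Ku}: for j in the support of u,
  e_j y = (y_j / u_j) u e_j lies in Ku, so e_j is in W, while e_j is not in Ku since u has a
  second nonzero coordinate. In (ii) it remains to treat u = lambda (a_i (x) b_p). Then
  u^2 in Ku forces c1 i j * c2 p q = 0 for (j, q) /= (i, p), so the i-th row of c1 or the p-th
  row of c2 vanishes off the diagonal, and accordingly the span of the a_i (x) b_q (q in N2),
  or of the a_j (x) b_p (j in N1), is such an ideal W.
*)

definition evo_basis :: "'i \<Rightarrow> 'i \<Rightarrow> 'k::field" where
  "evo_basis m = (\<lambda>i. if i = m then 1 else 0)"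

text \<open>The preimage of the annihilator of A/I.\<close>
definition evo_rel_ann :: "'i set \<Rightarrow> ('i \<Rightarrow> 'i \<Rightarrow> 'k::field) \<Rightarrow> ('i \<Rightarrow> 'k) set \<Rightarrow> ('i \<Rightarrow> 'k) set"
  where "evo_rel_ann N c I = {x \<in> evo_carrier N. \<forall>y \<in> evo_carrier N. evo_mult N c x y \<in> I}"

lemma evo_basis_carrier: "m \<in> N \<Longrightarrow> evo_basis m \<in> evo_carrier N"
  by (simp add: evo_basis_def evo_carrier_def)

lemma evo_mult_commute: "evo_mult N c x y = evo_mult N c y x"
  by (simp add: evo_mult_def fun_eq_iff ac_simps)

lemma evo_mult_carrier: "evo_mult N c x y \<in> evo_carrier N"
  by (simp add: evo_mult_def evo_carrier_def)

lemma evo_mult_add_left: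
  "evo_mult N c (evo_add x y) z = evo_add (evo_mult N c x z) (evo_mult N c y z)"
  by (auto simp: evo_mult_def evo_add_def sum.distrib algebra_simps)

lemma evo_mult_smult_left:
  "evo_mult N c (evo_smult a x) z = evo_smult a (evo_mult N c x z)"
  by (auto simp: evo_mult_def evo_smult_def sum_distrib_left algebra_simps)

lemma evo_mult_diff:
  "(\<lambda>k. evo_mult N c x' y' k - evo_mult N c x y k)
     = evo_add (evo_mult N c (\<lambda>i. x' i - x i) y') (evo_mult N c x (\<lambda>i. y' i - y i))"
  by (auto simp: evo_mult_def evo_add_def sum_subtractf[symmetric] sum.distrib[symmetric] algebra_simps)

lemma evo_mult_basis_right:
  assumes "finite N" "m \<in> N"
  shows "evo_mult N c x (evo_basis m) = (\<lambda>k. if k \<in> N then x m * c m k else 0)"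
proof -
  have "(\<Sum>i\<in>N. x i * evo_basis m i * c i k) = (\<Sum>i\<in>N. if i = m then x m * c m k else 0)" for k
    by (rule sum.cong) (auto simp: evo_basis_def)
  then show ?thesis using assms by (simp add: evo_mult_def fun_eq_iff)
qed

lemma evo_idealD:
  assumes "evo_ideal N c I"
  shows "I \<subseteq> evo_carrier N" and "evo_zero \<in> I"
    and "x \<in> I \<Longrightarrow> y \<in> I \<Longrightarrow> evo_add x y \<in> I"
    and "x \<in> I \<Longrightarrow> evo_smult a x \<in> I"
    and "x \<in> I \<Longrightarrow> y \<in> evo_carrier N \<Longrightarrow> evo_mult N c x y \<in> I"
    and "x \<in> I \<Longrightarrow> y \<in> evo_carrier N \<Longrightarrow> evo_mult N c y x \<in> I"
  using assms by (auto simp: evo_ideal_def alg_ideal_def)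

lemma evo_ideal_diff:
  assumes "evo_ideal N c I" "x \<in> I" "y \<in> I"
  shows "(\<lambda>i. x i - y i) \<in> I"
proof -
  have "evo_add x (evo_smult (-1) y) \<in> I"
    using assms by (intro evo_idealD) (auto intro: evo_idealD)
  then show ?thesis by (simp add: evo_add_def evo_smult_def)
qed

lemma mem_coset_iff: "z \<in> coset evo_add x I \<longleftrightarrow> (\<lambda>i. z i - x i) \<in> I"
proof
  assume "z \<in> coset evo_add x I"
  then show "(\<lambda>i. z i - x i) \<in> I" by (auto simp: coset_def evo_add_def)
next
  assume "(\<lambda>i. z i - x i) \<in> I"
  moreover have "z = evo_add x (\<lambda>i. z i - x i)" by (simp add: evo_add_def)
  ultimately show "z \<in> coset evo_add x I" unfolding coset_def by blast
qed

lemma coset_zero: "coset evo_add evo_zero I = I"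
  by (simp add: coset_def evo_add_def evo_zero_def)

lemma coset_self:
  assumes "evo_ideal N c I"
  shows "x \<in> coset evo_add x I"
  using evo_idealD(2)[OF assms] by (simp add: mem_coset_iff evo_zero_def)

lemma coset_eqI:
  assumes I: "evo_ideal N c I" and xy: "(\<lambda>i. x i - y i) \<in> I"
  shows "coset evo_add x I = coset evo_add y I"
proof (rule set_eqI)
  fix z
  have "(\<lambda>i. z i - y i) = evo_add (\<lambda>i. z i - x i) (\<lambda>i. x i - y i)"
    and "(\<lambda>i. z i - x i) = (\<lambda>i. (z i - y i) - (x i - y i))"
    by (simp_all add: evo_add_def)
  then show "z \<in> coset evo_add x I \<longleftrightarrow> z \<in> coset evo_add y I"
    using xy evo_idealD(3)[OF I] evo_ideal_diff[OF I] by (metis mem_coset_iff)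
qed

lemma some_coset_diff:
  assumes "evo_ideal N c I"
  shows "(\<lambda>i. (SOME z. z \<in> coset evo_add x I) i - x i) \<in> I"
  using someI[of "\<lambda>z. z \<in> coset evo_add x I", OF coset_self[OF assms]]
  by (simp add: mem_coset_iff)

lemma quot_add_coset:
  assumes I: "evo_ideal N c I"
  shows "quot_add evo_add I (coset evo_add x I) (coset evo_add y I) = coset evo_add (evo_add x y) I"
proof -
  define x' where "x' = (SOME z. z \<in> coset evo_add x I)"
  define y' where "y' = (SOME z. z \<in> coset evo_add y I)"
  have "evo_add (\<lambda>i. x' i - x i) (\<lambda>i. y' i - y i) \<in> I"
    using some_coset_diff[OF I] by (intro evo_idealD(3)[OF I]) (simp_all add: x'_def y'_def)
  then have "(\<lambda>i. evo_add x' y' i - evo_add x y i) \<in> I"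
    by (simp add: evo_add_def algebra_simps)
  then show ?thesis
    unfolding quot_add_def x'_def[symmetric] y'_def[symmetric] by (rule coset_eqI[OF I])
qed

lemma quot_smult_coset:
  assumes I: "evo_ideal N c I"
  shows "quot_smult evo_add evo_smult I a (coset evo_add x I) = coset evo_add (evo_smult a x) I"
proof -
  define x' where "x' = (SOME z. z \<in> coset evo_add x I)"
  have "evo_smult a (\<lambda>i. x' i - x i) \<in> I"
    using some_coset_diff[OF I] by (intro evo_idealD(4)[OF I]) (simp add: x'_def)
  then have "(\<lambda>i. evo_smult a x' i - evo_smult a x i) \<in> I"
    by (simp add: evo_smult_def algebra_simps)
  then show ?thesis
    unfolding quot_smult_def x'_def[symmetric] by (rule coset_eqI[OF I])
qed

lemma quot_mul_coset:
  assumes I: "evo_ideal N c I" and x: "x \<in> evo_carrier N" and y: "y \<in> evo_carrier N"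
  shows "quot_mul evo_add (evo_mult N c) I (coset evo_add x I) (coset evo_add y I)
           = coset evo_add (evo_mult N c x y) I"
proof -
  define x' where "x' = (SOME z. z \<in> coset evo_add x I)"
  define y' where "y' = (SOME z. z \<in> coset evo_add y I)"
  have dx: "(\<lambda>i. x' i - x i) \<in> I" and dy: "(\<lambda>i. y' i - y i) \<in> I"
    using some_coset_diff[OF I] by (simp_all add: x'_def y'_def)
  have "y' \<in> evo_carrier N"
    using y dy evo_idealD(1)[OF I] by (force simp: evo_carrier_def)
  then have "evo_add (evo_mult N c (\<lambda>i. x' i - x i) y') (evo_mult N c x (\<lambda>i. y' i - y i)) \<in> I"
    using dx dy x by (intro evo_idealD(3,5,6)[OF I])
  then have "(\<lambda>k. evo_mult N c x' y' k - evo_mult N c x y k) \<in> I"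
    by (simp only: evo_mult_diff)
  then show ?thesis
    unfolding quot_mul_def x'_def[symmetric] y'_def[symmetric] by (rule coset_eqI[OF I])
qed

lemma quot_ideal_image:
  assumes I: "evo_ideal N c I" and W: "evo_ideal N c W"
  shows "alg_ideal (quot_carrier (evo_carrier N) evo_add I) (quot_add evo_add I)
           (quot_smult evo_add evo_smult I) (quot_mul evo_add (evo_mult N c) I) I
           ((\<lambda>x. coset evo_add x I) ` W)"
proof -
  note WD = evo_idealD[OF W]
  show ?thesis
    unfolding alg_ideal_def
  proof (intro conjI ballI allI)
    show "(\<lambda>x. coset evo_add x I) ` W \<subseteq> quot_carrier (evo_carrier N) evo_add I"
      using WD(1) by (auto simp: quot_carrier_def)
    show "I \<in> (\<lambda>x. coset evo_add x I) ` W"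
      using WD(2) coset_zero by (metis image_eqI)
  next
    fix X Y assume "X \<in> (\<lambda>x. coset evo_add x I) ` W" "Y \<in> (\<lambda>x. coset evo_add x I) ` W"
    then show "quot_add evo_add I X Y \<in> (\<lambda>x. coset evo_add x I) ` W"
      using WD(3) quot_add_coset[OF I] by auto
  next
    fix a X assume "X \<in> (\<lambda>x. coset evo_add x I) ` W"
    then show "quot_smult evo_add evo_smult I a X \<in> (\<lambda>x. coset evo_add x I) ` W"
      using WD(4) quot_smult_coset[OF I] by auto
  next
    fix X Y assume "X \<in> (\<lambda>x. coset evo_add x I) ` W" "Y \<in> quot_carrier (evo_carrier N) evo_add I"
    then obtain x y where "x \<in> W" "y \<in> evo_carrier N"
      and "X = coset evo_add x I" "Y = coset evo_add y I"
      by (auto simp: quot_carrier_def)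
    moreover have "x \<in> evo_carrier N" using \<open>x \<in> W\<close> WD(1) by blast
    ultimately show "quot_mul evo_add (evo_mult N c) I Y X \<in> (\<lambda>x. coset evo_add x I) ` W"
      and "quot_mul evo_add (evo_mult N c) I X Y \<in> (\<lambda>x. coset evo_add x I) ` W"
      using WD(5,6) quot_mul_coset[OF I] by auto
  qed
qed

lemma evo_quot_not_simple_if_square_in_ideal:
  assumes I: "evo_ideal N c I"
    and sq: "\<And>x y. x \<in> evo_carrier N \<Longrightarrow> y \<in> evo_carrier N \<Longrightarrow> evo_mult N c x y \<in> I"
  shows "\<not> evo_quot_simple N c I"
proof
  assume "evo_quot_simple N c I"
  then obtain x y where x: "x \<in> evo_carrier N" and y: "y \<in> evo_carrier N"
    and "quot_mul evo_add (evo_mult N c) I (coset evo_add x I) (coset evo_add y I) \<noteq> I"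
    by (auto simp: evo_quot_simple_def quot_simple_def alg_simple_def quot_carrier_def)
  then have "coset evo_add (evo_mult N c x y) I \<noteq> coset evo_add evo_zero I"
    by (simp add: quot_mul_coset[OF I] coset_zero)
  moreover have "(\<lambda>i. evo_mult N c x y i - evo_zero i) \<in> I"
    using sq[OF x y] by (simp add: evo_zero_def)
  ultimately show False using coset_eqI[OF I] by blast
qed

lemma evo_quot_not_simple_if_intermediate_ideal:
  assumes I: "evo_ideal N c I" and W: "evo_ideal N c W"
    and IW: "I \<subset> W" and WN: "W \<subset> evo_carrier N"
  shows "\<not> evo_quot_simple N c I"
proof
  define J where "J = (\<lambda>x. coset evo_add x I) ` W"
  assume "evo_quot_simple N c I"
  then have "J = {I} \<or> J = quot_carrier (evo_carrier N) evo_add I"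
    using quot_ideal_image[OF I W]
    unfolding J_def evo_quot_simple_def quot_simple_def alg_simple_def by blast
  then show False
  proof
    assume "J = {I}"
    obtain w where "w \<in> W" "w \<notin> I" using IW by blast
    then show False
      using \<open>J = {I}\<close> coset_self[OF I, of w] unfolding J_def by blast
  next
    assume J_full: "J = quot_carrier (evo_carrier N) evo_add I"
    obtain x where x: "x \<in> evo_carrier N" "x \<notin> W" using WN by blast
    then obtain w where w: "w \<in> W" "coset evo_add x I = coset evo_add w I"
      using J_full unfolding J_def quot_carrier_def by blast
    then have "(\<lambda>i. x i - w i) \<in> W"
      using coset_self[OF I, of x] IW by (auto simp: mem_coset_iff)
    then have "evo_add w (\<lambda>i. x i - w i) \<in> W" using w(1) by (intro evo_idealD(3)[OF W])
    then show False using x(2) by (simp add: evo_add_def)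
  qed
qed

lemma evo_ideal_rel_ann:
  fixes I :: "('i \<Rightarrow> 'k::field) set"
  assumes I: "evo_ideal N c I"
  shows "evo_ideal N c (evo_rel_ann N c I)"
  unfolding evo_ideal_def alg_ideal_def
proof (intro conjI ballI allI)
  show "evo_rel_ann N c I \<subseteq> evo_carrier N" by (auto simp: evo_rel_ann_def)
  have "evo_mult N c evo_zero y = evo_zero" for y
    by (simp add: evo_mult_def evo_zero_def fun_eq_iff)
  then show "evo_zero \<in> evo_rel_ann N c I"
    using evo_idealD(2)[OF I] by (simp add: evo_rel_ann_def evo_carrier_def evo_zero_def)
next
  fix x y assume x: "x \<in> evo_rel_ann N c I" and y: "y \<in> evo_rel_ann N c I"
  then have "evo_add x y \<in> evo_carrier N"
    by (simp add: evo_rel_ann_def evo_add_def evo_carrier_def)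
  moreover have "evo_mult N c (evo_add x y) z \<in> I" if "z \<in> evo_carrier N" for z
    using x y that by (simp add: evo_rel_ann_def evo_mult_add_left evo_idealD(3)[OF I])
  ultimately show "evo_add x y \<in> evo_rel_ann N c I" by (simp add: evo_rel_ann_def)
next
  fix a x assume x: "x \<in> evo_rel_ann N c I"
  then have "evo_smult a x \<in> evo_carrier N"
    by (simp add: evo_rel_ann_def evo_smult_def evo_carrier_def)
  moreover have "evo_mult N c (evo_smult a x) z \<in> I" if "z \<in> evo_carrier N" for z
    using x that by (simp add: evo_rel_ann_def evo_mult_smult_left evo_idealD(4)[OF I])
  ultimately show "evo_smult a x \<in> evo_rel_ann N c I" by (simp add: evo_rel_ann_def)
next
  fix x a :: "'i \<Rightarrow> 'k"
  assume "x \<in> evo_rel_ann N c I" "a \<in> evo_carrier N"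
  then have "evo_mult N c x a \<in> evo_rel_ann N c I"
    using evo_idealD(5)[OF I] by (simp add: evo_rel_ann_def evo_mult_carrier)
  then show "evo_mult N c x a \<in> evo_rel_ann N c I" "evo_mult N c a x \<in> evo_rel_ann N c I"
    by (simp_all add: evo_mult_commute)
qed

lemma evo_ideal_subset_rel_ann:
  "evo_ideal N c I \<Longrightarrow> I \<subseteq> evo_rel_ann N c I"
  using evo_idealD(1,5) by (fastforce simp: evo_rel_ann_def)

lemma evo_basis_in_rel_ann:
  assumes N: "finite N" and I: "evo_ideal N c I" and u: "u \<in> I" "u m \<noteq> 0"
  shows "evo_basis m \<in> evo_rel_ann N c I"
proof -
  have m: "m \<in> N" using u evo_idealD(1)[OF I] by (auto simp: evo_carrier_def)
  have "evo_mult N c (evo_basis m) y \<in> I" if "y \<in> evo_carrier N" for y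
  proof -
    have "evo_mult N c (evo_basis m) y = evo_smult (y m / u m) (evo_mult N c u (evo_basis m))"
      using u(2) by (simp add: evo_mult_commute evo_mult_basis_right[OF N m] evo_smult_def fun_eq_iff)
    also have "\<dots> \<in> I"
      using u(1) evo_basis_carrier[OF m] by (intro evo_idealD(4,5)[OF I])
    finally show ?thesis .
  qed
  then show ?thesis using evo_basis_carrier[OF m] by (simp add: evo_rel_ann_def)
qed

lemma span1_self: "u \<in> span1 u"
  unfolding span1_def evo_smult_def by (rule image_eqI[of _ _ 1]) simp_all

lemma evo_basis_notin_span1:
  assumes "u j \<noteq> 0" "j \<noteq> m"
  shows "evo_basis m \<notin> span1 u"
proof
  assume "evo_basis m \<in> span1 u"
  then obtain a where a: "evo_basis m = (\<lambda>i. a * u i)" by (auto simp: span1_def evo_smult_def)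
  have "a = 0" using fun_cong[OF a, of j] assms by (simp add: evo_basis_def)
  then show False using fun_cong[OF a, of m] by (simp add: evo_basis_def)
qed

lemma evo_quot_span1_not_simple_if_supp_gt_1:
  fixes u :: "'i \<Rightarrow> 'k::field"
  assumes N: "finite N" and I: "evo_ideal N c (span1 u)" and supp: "card (evo_supp N u) > 1"
  shows "\<not> evo_quot_simple N c (span1 u)"
proof (cases "evo_rel_ann N c (span1 u) = evo_carrier N")
  case True
  show ?thesis
  proof (rule evo_quot_not_simple_if_square_in_ideal[OF I])
    fix x y :: "'i \<Rightarrow> 'k"
    assume "x \<in> evo_carrier N" and y: "y \<in> evo_carrier N"
    then have "x \<in> evo_rel_ann N c (span1 u)" using True by simp
    with y show "evo_mult N c x y \<in> span1 u" by (simp add: evo_rel_ann_def)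
  qed
next
  case False
  have "finite (evo_supp N u)" using N by (simp add: evo_supp_def)
  then obtain j j' where "j \<in> evo_supp N u" "j' \<in> evo_supp N u" "j' \<noteq> j"
    using supp card_le_Suc0_iff_eq[of "evo_supp N u"] by (auto simp: not_le[symmetric])
  then have j: "u j \<noteq> 0" and j': "u j' \<noteq> 0" "j' \<noteq> j" by (simp_all add: evo_supp_def)
  have "evo_basis j \<in> evo_rel_ann N c (span1 u)"
    by (rule evo_basis_in_rel_ann[OF N I span1_self j])
  moreover have "evo_basis j \<notin> span1 u"
    using j' by (rule evo_basis_notin_span1)
  ultimately have "span1 u \<subset> evo_rel_ann N c (span1 u)"
    using evo_ideal_subset_rel_ann[OF I] by blast
  moreover have "evo_rel_ann N c (span1 u) \<subset> evo_carrier N"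
    using evo_idealD(1)[OF evo_ideal_rel_ann[OF I]] False by (rule psubsetI)
  ultimately show ?thesis
    by (rule evo_quot_not_simple_if_intermediate_ideal[OF I evo_ideal_rel_ann[OF I]])
qed

lemma evo_ideal_coord_subspace:
  assumes "M \<subseteq> N" and closed: "\<And>m k. m \<in> M \<Longrightarrow> k \<in> N - M \<Longrightarrow> c m k = 0"
  shows "evo_ideal N c (evo_carrier M)"
proof -
  have "evo_mult N c x y \<in> evo_carrier M" if "y \<in> evo_carrier M" for x y
  proof -
    have "x i * y i * c i k = 0" if "i \<in> N" "k \<in> N - M" for i k
      using closed[of i k] \<open>y \<in> evo_carrier M\<close> that by (cases "i \<in> M") (auto simp: evo_carrier_def)
    then show ?thesis by (simp add: evo_mult_def evo_carrier_def sum.neutral)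
  qed
  then show ?thesis
    using assms(1) unfolding evo_ideal_def alg_ideal_def
    by (auto simp: evo_carrier_def evo_add_def evo_smult_def evo_zero_def evo_mult_commute)
qed

lemma evo_carrier_psubset:
  assumes "M \<subset> N"
  shows "(evo_carrier M :: ('i \<Rightarrow> 'k::field) set) \<subset> evo_carrier N"
proof -
  obtain m where "m \<in> N" "m \<notin> M" using assms by blast
  then have "(evo_basis m :: 'i \<Rightarrow> 'k) \<in> evo_carrier N - evo_carrier M"
    by (simp add: evo_basis_carrier evo_carrier_def evo_basis_def)
  then show ?thesis using assms by (auto simp: evo_carrier_def)
qed

lemma evo_ideal_span1_single_support_coeff:
  assumes N: "finite N" and I: "evo_ideal N c (span1 u)"
    and u: "u m \<noteq> 0" "\<And>i. i \<noteq> m \<Longrightarrow> u i = 0" and k: "k \<in> N" "k \<noteq> m"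
  shows "c m k = 0"
proof -
  have m: "m \<in> N" using u(1) evo_idealD(1)[OF I] span1_self by (auto simp: evo_carrier_def)
  have "evo_mult N c u (evo_basis m) \<in> span1 u"
    using span1_self evo_basis_carrier[OF m] by (rule evo_idealD(5)[OF I])
  then obtain a where "evo_mult N c u (evo_basis m) = (\<lambda>i. a * u i)"
    by (auto simp: span1_def evo_smult_def)
  from fun_cong[OF this, of k] show ?thesis
    using u k by (simp add: evo_mult_basis_right[OF N m])
qed

lemma card_evo_supp_le_1D:
  assumes N: "finite N" and u: "u \<in> evo_carrier N" "u m \<noteq> 0"
    and supp: "card (evo_supp N u) \<le> 1" and m': "m' \<noteq> m"
  shows "u m' = 0"
proof (rule ccontr)
  assume "u m' \<noteq> 0"
  with u have "m \<in> evo_supp N u" "m' \<in> evo_supp N u"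
    by (auto simp: evo_supp_def evo_carrier_def)
  moreover have "finite (evo_supp N u)" using N by (simp add: evo_supp_def)
  ultimately have "m' = m" using supp card_le_Suc0_iff_eq[of "evo_supp N u"] by simp
  with m' show False ..
qed

lemma card_gt_1_obtain_other:
  assumes "1 < card A" "x \<in> A"
  obtains y where "y \<in> A" "y \<noteq> x"
proof -
  have "card (A - {x}) \<noteq> 0" using assms by (simp add: card_Diff_singleton)
  then have "A - {x} \<noteq> {}" by (metis card.empty)
  then show ?thesis using that by blast
qed

lemma evo_quot_span1_not_simple_closed_coords:
  assumes I: "evo_ideal N c (span1 u)" and M: "M \<subset> N"
    and closed: "\<And>m k. m \<in> M \<Longrightarrow> k \<in> N - M \<Longrightarrow> c m k = 0"
    and u: "u \<in> evo_carrier M" "u j \<noteq> 0" and m: "m \<in> M" "m \<noteq> j"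
  shows "\<not> evo_quot_simple N c (span1 u)"
proof -
  have W: "evo_ideal N c (evo_carrier M)"
    using M closed by (intro evo_ideal_coord_subspace) auto
  have "span1 u \<subseteq> evo_carrier M"
    using u(1) by (auto simp: span1_def evo_smult_def evo_carrier_def)
  moreover have "evo_basis m \<in> evo_carrier M" using m(1) by (rule evo_basis_carrier)
  moreover have "evo_basis m \<notin> span1 u" using u(2) m(2) by (intro evo_basis_notin_span1) auto
  ultimately have "span1 u \<subset> evo_carrier M" by blast
  moreover have "evo_carrier M \<subset> evo_carrier N" using M by (rule evo_carrier_psubset)
  ultimately show ?thesis by (rule evo_quot_not_simple_if_intermediate_ideal[OF I W])
qed

lemma tensor_quot_span1_single_support_not_simple:
  fixes u :: "'i \<times> 'j \<Rightarrow> 'k::field"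
  assumes N1: "finite N1" "card N1 > 1" and N2: "finite N2" "card N2 > 1"
    and I: "evo_ideal (N1 \<times> N2) (tensor_const c1 c2) (span1 u)"
    and u: "u (i, p) \<noteq> 0" "\<And>m. m \<noteq> (i, p) \<Longrightarrow> u m = 0"
  shows "\<not> evo_quot_simple (N1 \<times> N2) (tensor_const c1 c2) (span1 u)"
proof -
  have ip: "i \<in> N1" "p \<in> N2"
    using u(1) evo_idealD(1)[OF I] span1_self by (auto simp: evo_carrier_def)
  obtain i' where i': "i' \<in> N1" "i' \<noteq> i" using N1(2) ip(1) by (rule card_gt_1_obtain_other)
  obtain p' where p': "p' \<in> N2" "p' \<noteq> p" using N2(2) ip(2) by (rule card_gt_1_obtain_other)
  have row: "c1 i j * c2 p q = 0" if "j \<in> N1" "q \<in> N2" "(j, q) \<noteq> (i, p)" for j q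
    using evo_ideal_span1_single_support_coeff[OF _ I u, of "(j, q)"] N1(1) N2(1) that
    by (simp add: tensor_const_def)
  have rows: "(\<forall>j\<in>N1 - {i}. c1 i j = 0) \<or> (\<forall>q\<in>N2 - {p}. c2 p q = 0)"
  proof (rule ccontr)
    assume "\<not> ?thesis"
    then obtain j q where "j \<in> N1 - {i}" "c1 i j \<noteq> 0" "q \<in> N2 - {p}" "c2 p q \<noteq> 0" by blast
    with row[of j q] show False by simp
  qed
  obtain M m where M: "M \<subset> N1 \<times> N2" "(i, p) \<in> M" "m \<in> M" "m \<noteq> (i, p)"
    and closed: "\<And>m k. m \<in> M \<Longrightarrow> k \<in> N1 \<times> N2 - M \<Longrightarrow> tensor_const c1 c2 m k = 0"
  proof (cases "\<forall>j\<in>N1 - {i}. c1 i j = 0")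
    case True
    then have "tensor_const c1 c2 m k = 0" if "m \<in> {i} \<times> N2" "k \<in> N1 \<times> N2 - {i} \<times> N2" for m k
      using that by (auto simp: tensor_const_def)
    moreover have "{i} \<times> N2 \<subset> N1 \<times> N2" using ip i' by blast
    ultimately show ?thesis using that[of "{i} \<times> N2" "(i, p')"] ip p' by blast
  next
    case False
    then have "\<forall>q\<in>N2 - {p}. c2 p q = 0" using rows by blast
    then have "tensor_const c1 c2 m k = 0" if "m \<in> N1 \<times> {p}" "k \<in> N1 \<times> N2 - N1 \<times> {p}" for m k
      using that by (auto simp: tensor_const_def)
    moreover have "N1 \<times> {p} \<subset> N1 \<times> N2" using ip p' by blast
    ultimately show ?thesis using that[of "N1 \<times> {p}" "(i', p)"] ip i' by blast
  qed
  have "u m = 0" if "m \<notin> M" for m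
    using M(2) that by (intro u(2)) blast
  then have "u \<in> evo_carrier M" by (simp add: evo_carrier_def)
  then show ?thesis
    using evo_quot_span1_not_simple_closed_coords[OF I M(1) closed _ u(1) M(3,4)] by blast
qed

theorem theorem4p7:
  shows "(\<forall>(N :: 'i set) (c :: 'i \<Rightarrow> 'i \<Rightarrow> 'k::field) u.
            finite N \<and> u \<in> evo_carrier N \<and> evo_ideal N c (span1 u) \<and> card (evo_supp N u) > 1
            \<longrightarrow> \<not> evo_quot_simple N c (span1 u))
       \<and> (\<forall>(N1 :: 'i set) (N2 :: 'j set) (c1 :: 'i \<Rightarrow> 'i \<Rightarrow> 'k) (c2 :: 'j \<Rightarrow> 'j \<Rightarrow> 'k) u.
            finite N1 \<and> finite N2 \<and> card N1 > 1 \<and> card N2 > 1 \<and>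
            u \<in> evo_carrier (N1 \<times> N2) \<and> evo_ideal (N1 \<times> N2) (tensor_const c1 c2) (span1 u) \<and>
            span1 u \<noteq> {evo_zero}
            \<longrightarrow> \<not> evo_quot_simple (N1 \<times> N2) (tensor_const c1 c2) (span1 u))"
proof (intro conjI allI impI; elim conjE)
  fix N :: "'i set" and c :: "'i \<Rightarrow> 'i \<Rightarrow> 'k" and u
  assume "finite N" "u \<in> evo_carrier N" "evo_ideal N c (span1 u)" "card (evo_supp N u) > 1"
  then show "\<not> evo_quot_simple N c (span1 u)" by (intro evo_quot_span1_not_simple_if_supp_gt_1)
next
  fix N1 :: "'i set" and N2 :: "'j set" and c1 c2 and u :: "'i \<times> 'j \<Rightarrow> 'k"
  assume N1: "finite N1" and N2: "finite N2" and card: "card N1 > 1" "card N2 > 1"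
    and u: "u \<in> evo_carrier (N1 \<times> N2)" and I: "evo_ideal (N1 \<times> N2) (tensor_const c1 c2) (span1 u)"
    and nonzero: "span1 u \<noteq> {evo_zero}"
  show "\<not> evo_quot_simple (N1 \<times> N2) (tensor_const c1 c2) (span1 u)"
  proof (cases "card (evo_supp (N1 \<times> N2) u) > 1")
    case True
    then show ?thesis using N1 N2 I by (intro evo_quot_span1_not_simple_if_supp_gt_1) simp_all
  next
    case False
    have "u \<noteq> evo_zero"
      using nonzero by (auto simp: span1_def evo_smult_def evo_zero_def)
    then obtain i p where ip: "u (i, p) \<noteq> 0"
      by (auto simp: evo_zero_def fun_eq_iff)
    have "u m = 0" if "m \<noteq> (i, p)" for m
      using card_evo_supp_le_1D[OF _ u ip _ that] N1 N2 False by simp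
    with ip show ?thesis
      using tensor_quot_span1_single_support_not_simple[OF N1 card(1) N2 card(2) I] by blast
  qed
qed

end
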